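(* Let $(A,\diamond,\circ,\lambda)$ be a left semi-truss such that $(A,\diamond)$ is a left cancellative semigroup, let $e$ be an idempotent of $(A,\diamond)$, and define $\sigma:A\to A$ by $\sigma(a)=a\circ e$. Write $a\triangleright b:=\lambda(a,b)$. Then: (1) $\sigma(a\circ b)=a\circ\sigma(b)$ for all $a,b\in A$; (2) $\sigma(a\circ b)=\sigma(a)\diamond(a\triangleright\sigma(b))$ for all $a,b\in A$; (3) $\sigma$ is bijective if and only if $(A,\circ)$ has a right identity $n$ and there is $u\in A$ with $e\circ u=u\circ e=n$.
   Context: A left semi-truss $(A,\diamond,\circ,\lambda)$ is a set $A$ with two associative binary operations $\diamond,\circ$ and a function $\lambda:A\times A\to A$ such that $a\circ(b\diamond c)=(a\circ b)\diamond\lambda(a,c)$ for all $a,b,c\in A$. A semigroup $(A,\diamond)$ is left cancellative if $a\diamond b=a\diamond c$ implies $b=c$. *)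

theory Defs
  imports Main
begin

definition associative_op :: "('a \<Rightarrow> 'a \<Rightarrow> 'a) \<Rightarrow> bool" where
  "associative_op f \<longleftrightarrow> (\<forall>a b c. f (f a b) c = f a (f b c))"

definition left_semi_truss ::
  "('a \<Rightarrow> 'a \<Rightarrow> 'a) \<Rightarrow> ('a \<Rightarrow> 'a \<Rightarrow> 'a) \<Rightarrow> ('a \<Rightarrow> 'a \<Rightarrow> 'a) \<Rightarrow> bool" where
  "left_semi_truss dia circ lam \<longleftrightarrow>
     associative_op dia \<and> associative_op circ \<and>
     (\<forall>a b c. circ a (dia b c) = dia (circ a b) (lam a c))"

definition left_cancellative :: "('a \<Rightarrow> 'a \<Rightarrow> 'a) \<Rightarrow> bool" where
  "left_cancellative f \<longleftrightarrow> (\<forall>a b c. f a b = f a c \<longrightarrow> b = c)"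

definition right_identity :: "('a \<Rightarrow> 'a \<Rightarrow> 'a) \<Rightarrow> 'a \<Rightarrow> bool" where
  "right_identity f n \<longleftrightarrow> (\<forall>a. f a n = a)"

end

theory Submission
  imports Defs
begin

text \<open>Left cancellativity makes the idempotent \<open>e\<close> a left identity of \<open>(A,\<diamond>)\<close>, so
  \<open>\<sigma>(b) = e \<diamond> \<sigma>(b)\<close> and the truss law expands \<open>a \<circ> (e \<diamond> \<sigma>(b))\<close> into (2). Part (3) is a fact
  about an arbitrary semigroup: right multiplication by \<open>e\<close> is bijective exactly when
  \<open>e\<close> is invertible with respect to some right identity \<open>n\<close>, the inverse map then being
  right multiplication by \<open>u\<close>.\<close>

lemma idempotent_left_neutral:
  assumes "associative_op f" and "left_cancellative f" and "f e e = e"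
  shows "f e x = x"
proof -
  have "f e (f e x) = f e x"
    using assms(1,3) unfolding associative_op_def by metis
  then show ?thesis
    using assms(2) unfolding left_cancellative_def by blast
qed

lemma bij_right_mult_iff:
  assumes "associative_op f"
  shows "bij (\<lambda>a. f a e) \<longleftrightarrow> (\<exists>n. right_identity f n \<and> (\<exists>u. f e u = n \<and> f u e = n))"
proof
  have assoc: "f (f a b) c = f a (f b c)" for a b c
    using assms unfolding associative_op_def by blast
  assume "bij (\<lambda>a. f a e)"
  then have inj: "f a e = f b e \<Longrightarrow> a = b" and surj: "\<exists>a. y = f a e" for a b y
    by (auto dest: bij_is_inj bij_is_surj injD surjD)
  obtain n where n: "f n e = e"
    using surj by metis
  have right_id: "f a n = a" for a
    using inj[of "f a n" a] by (simp add: assoc n)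
  obtain u where u: "f u e = n"
    using surj by metis
  have "f e u = n"
    using inj[of "f e u" n] by (simp add: assoc u right_id n)
  with u right_id show "\<exists>n. right_identity f n \<and> (\<exists>u. f e u = n \<and> f u e = n)"
    unfolding right_identity_def by blast
next
  assume "\<exists>n. right_identity f n \<and> (\<exists>u. f e u = n \<and> f u e = n)"
  then obtain n u where right_id: "\<And>a. f a n = a" and "f e u = n" and "f u e = n"
    unfolding right_identity_def by blast
  with assms have "(\<lambda>a. f a u) \<circ> (\<lambda>a. f a e) = id" and "(\<lambda>a. f a e) \<circ> (\<lambda>a. f a u) = id"
    unfolding associative_op_def by (simp_all add: fun_eq_iff)
  then show "bij (\<lambda>a. f a e)"
    by (rule o_bij)
qed

theorem proposition2p4:
  fixes dia circ lam :: "'a \<Rightarrow> 'a \<Rightarrow> 'a" and e :: 'a and \<sigma> :: "'a \<Rightarrow> 'a"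
  assumes "left_semi_truss dia circ lam"
    and "left_cancellative dia"
    and "dia e e = e"
    and "\<And>a. \<sigma> a = circ a e"
  shows "(\<forall>a b. \<sigma> (circ a b) = circ a (\<sigma> b))
       \<and> (\<forall>a b. \<sigma> (circ a b) = dia (\<sigma> a) (lam a (\<sigma> b)))
       \<and> (bij \<sigma> \<longleftrightarrow> (\<exists>n. right_identity circ n \<and> (\<exists>u. circ e u = n \<and> circ u e = n)))"
proof -
  have dia_assoc: "associative_op dia" and circ_assoc: "associative_op circ"
    and truss: "\<And>a b c. circ a (dia b c) = dia (circ a b) (lam a c)"
    using assms(1) unfolding left_semi_truss_def by auto
  have \<sigma>_def: "\<sigma> = (\<lambda>a. circ a e)"
    using assms(4) by blast
  have part1: "\<sigma> (circ a b) = circ a (\<sigma> b)" for a b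
    using circ_assoc unfolding \<sigma>_def associative_op_def by blast
  have part2: "\<sigma> (circ a b) = dia (\<sigma> a) (lam a (\<sigma> b))" for a b
  proof -
    have "\<sigma> (circ a b) = circ a (dia e (\<sigma> b))"
      using part1 idempotent_left_neutral[OF dia_assoc assms(2,3)] by simp
    also have "\<dots> = dia (\<sigma> a) (lam a (\<sigma> b))"
      by (simp add: truss \<sigma>_def)
    finally show ?thesis .
  qed
  show ?thesis
    using part1 part2 bij_right_mult_iff[OF circ_assoc] unfolding \<sigma>_def by blast
qed

end
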